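(* Let $h$ be a bilinear form on $V$. For every double vector $\omega\in\mathcal D(V)$, $$\widehat h_R(\omega)=e^h\circ\omega\quad\text{and}\quad\widehat h_L(\omega)=\omega\circ e^{(h^t)},$$ where $e^h=\sum_{p\geq0}\frac{h^p}{p!}$.
   Context: $(V,g)$ is a Euclidean real vector space of dimension $n$, identified with $V^*$ via $g$, so double forms and double vectors $\mathcal D(V)=\bigoplus_{p,q}\Lambda^pV\otimes\Lambda^qV$ are identified; $\Lambda V$ carries the inner product induced by $g$. Exterior product: $(\theta_1\otimes\theta_2)(\theta_3\otimes\theta_4)=(\theta_1\wedge\theta_3)\otimes(\theta_2\wedge\theta_4)$; powers $h^p$ are for this product, $h^0=1$, and $h$ is regarded as a $(1,1)$ double vector. Composition product: $(\theta_1\otimes\theta_2)\circ(\theta_3\otimes\theta_4)=\langle\theta_1,\theta_4\rangle\theta_3\otimes\theta_2$ ($0$ if $\theta_1,\theta_4$ have different degrees), extended bilinearly. Transpose: $h^t(x,y)=h(y,x)$. $\bar h$ is the endomorphism of $V$ with $\langle\bar h(v),w\rangle=h(v,w)$, $\widehat h$ the exterior algebra endomorphism of $\Lambda V$ with $\widehat h(1)=1$, $\widehat h(v_1\wedge\cdots\wedge v_p)=\bar h(v_1)\wedge\cdots\wedge\bar h(v_p)$, and $\widehat h_R(\theta_1\otimes\theta_2)=\theta_1\otimes\widehat h(\theta_2)$, $\widehat h_L(\theta_1\otimes\theta_2)=\widehat h(\theta_1)\otimes\theta_2$, extended linearly. *)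

theory Defs
  imports "HOL-Analysis.Analysis"
begin

text \<open>Model: V = real^'n with the standard (orthonormal) basis e_i = axis i 1.
  The index type carries a linear order, used to order basis wedges
  e_I = e_{i_1} wedge ... wedge e_{i_p} with i_1 < ... < i_p.
  An element of Lambda V is given by its coefficients on the orthonormal basis (e_I)_I,
  a double vector by its coefficients on the basis (e_I (x) e_J)_{I,J}.\<close>

type_synonym 'n extv = "'n set \<Rightarrow> real"
type_synonym 'n dvec = "'n set \<Rightarrow> 'n set \<Rightarrow> real"

text \<open>Sign of e_I wedge e_K relative to e_{I union K} (I, K disjoint).\<close>
definition inv_sign :: "'n::linorder set \<Rightarrow> 'n set \<Rightarrow> real" where
  "inv_sign I K = (-1) ^ card {(i, k). i \<in> I \<and> k \<in> K \<and> k < i}"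

definition ext_one :: "'n extv" where
  "ext_one = (\<lambda>I. if I = {} then 1 else 0)"

definition ext_wedge :: "'n::linorder extv \<Rightarrow> 'n extv \<Rightarrow> 'n extv" where
  "ext_wedge a b = (\<lambda>A. \<Sum>I\<in>Pow A. inv_sign I (A - I) * a I * b (A - I))"

definition ext_vec :: "real ^ 'n \<Rightarrow> 'n extv" where
  "ext_vec v = (\<lambda>I. if card I = 1 then v $ the_elem I else 0)"

text \<open>bar h: <bar h v, w> = h v w.\<close>
definition hbar :: "(real ^ 'n \<Rightarrow> real ^ 'n \<Rightarrow> real) \<Rightarrow> real ^ 'n \<Rightarrow> real ^ 'n" where
  "hbar h v = (\<chi> j. h v (axis j 1))"

definition hat_basis :: "(real ^ ('n::{finite,linorder}) \<Rightarrow> real ^ ('n::{finite,linorder}) \<Rightarrow> real) \<Rightarrow> ('n::{finite,linorder}) set \<Rightarrow> ('n::{finite,linorder}) extv" where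
  "hat_basis h I = foldr ext_wedge (map (\<lambda>i. ext_vec (hbar h (axis i 1))) (sorted_list_of_set I)) ext_one"

definition hat :: "(real ^ ('n::{finite,linorder}) \<Rightarrow> real ^ ('n::{finite,linorder}) \<Rightarrow> real) \<Rightarrow> ('n::{finite,linorder}) extv \<Rightarrow> ('n::{finite,linorder}) extv" where
  "hat h \<theta> = (\<lambda>L. \<Sum>I\<in>UNIV. \<theta> I * hat_basis h I L)"

text \<open>hat_R (theta1 (x) theta2) = theta1 (x) hat h theta2, extended linearly.\<close>
definition hatR :: "(real ^ ('n::{finite,linorder}) \<Rightarrow> real ^ ('n::{finite,linorder}) \<Rightarrow> real) \<Rightarrow> ('n::{finite,linorder}) dvec \<Rightarrow> ('n::{finite,linorder}) dvec" where
  "hatR h \<omega> = (\<lambda>I L. \<Sum>J\<in>UNIV. \<omega> I J * hat_basis h J L)"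

text \<open>hat_L (theta1 (x) theta2) = hat h theta1 (x) theta2, extended linearly.\<close>
definition hatL :: "(real ^ ('n::{finite,linorder}) \<Rightarrow> real ^ ('n::{finite,linorder}) \<Rightarrow> real) \<Rightarrow> ('n::{finite,linorder}) dvec \<Rightarrow> ('n::{finite,linorder}) dvec" where
  "hatL h \<omega> = (\<lambda>K J. \<Sum>I\<in>UNIV. \<omega> I J * hat_basis h I K)"

text \<open>Exterior product of double vectors:
  (theta1 (x) theta2)(theta3 (x) theta4) = (theta1 wedge theta3) (x) (theta2 wedge theta4).\<close>
definition dmult :: "'n::linorder dvec \<Rightarrow> 'n dvec \<Rightarrow> 'n dvec" where
  "dmult \<omega> \<psi> = (\<lambda>A B. \<Sum>I\<in>Pow A. \<Sum>J\<in>Pow B.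
      inv_sign I (A - I) * inv_sign J (B - J) * \<omega> I J * \<psi> (A - I) (B - J))"

definition dv_one :: "'n dvec" where
  "dv_one = (\<lambda>I J. if I = {} \<and> J = {} then 1 else 0)"

primrec dpow :: "'n::linorder dvec \<Rightarrow> nat \<Rightarrow> 'n dvec" where
  "dpow \<omega> 0 = dv_one"
| "dpow \<omega> (Suc p) = dmult \<omega> (dpow \<omega> p)"

definition dexp :: "'n::linorder dvec \<Rightarrow> 'n dvec" where
  "dexp \<omega> = (\<lambda>A B. \<Sum>p. dpow \<omega> p A B / fact p)"

text \<open>Composition product: (e_I (x) e_J) o (e_K (x) e_L) = <e_I, e_L> e_K (x) e_J, extended bilinearly;
  the basis (e_I) of Lambda V is orthonormal for the induced inner product.\<close>
definition dcomp :: "'n::finite dvec \<Rightarrow> 'n dvec \<Rightarrow> 'n dvec" where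
  "dcomp \<omega> \<psi> = (\<lambda>K J. \<Sum>I\<in>UNIV. \<omega> I J * \<psi> K I)"

definition form_dvec :: "(real ^ 'n \<Rightarrow> real ^ 'n \<Rightarrow> real) \<Rightarrow> 'n dvec" where
  "form_dvec h = (\<lambda>A B. if card A = 1 \<and> card B = 1
      then h (axis (the_elem A) 1) (axis (the_elem B) 1) else 0)"

definition form_transpose :: "('a \<Rightarrow> 'a \<Rightarrow> real) \<Rightarrow> 'a \<Rightarrow> 'a \<Rightarrow> real" where
  "form_transpose h = (\<lambda>x y. h y x)"

end

theory Submission
  imports Defs
begin

text \<open>The coefficient of \<open>e_A \<otimes> e_B\<close>
  in \<open>exp h\<close> is the minor of the matrix \<open>(h(e_i, e_j))\<close> with rows \<open>A\<close> and columns \<open>B\<close>: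
  the recursion \<open>h^(p+1) = h h^p\<close> is a Laplace expansion along any row of that minor, so
  \<open>h^p\<close> has coefficient \<open>p!\<close> times the minor, and the factorials cancel in the exponential
  series. Expanding \<open>hat h (e_A) = bar h (e_a1) \<and> \<dots> \<and> bar h (e_ap)\<close> along its first factor is
  again a Laplace expansion, so the coefficient of \<open>e_B\<close> in \<open>hat h (e_A)\<close> is the same minor.
  Hence composing with \<open>exp h\<close> on the left applies \<open>hat h\<close> to the right factor, and
  transposing \<open>h\<close> transposes the minors, which gives the statement for \<open>hat_L\<close>.\<close>

definition inversions :: "'a::linorder set \<Rightarrow> ('a \<Rightarrow> 'a) \<Rightarrow> ('a \<times> 'a) set" where
  "inversions A t = {(x, y). x \<in> A \<and> y \<in> A \<and> x < y \<and> t y < t x}"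

definition inversion_sign :: "'a::linorder set \<Rightarrow> ('a \<Rightarrow> 'a) \<Rightarrow> real" where
  "inversion_sign A t = (-1) ^ card (inversions A t)"

text \<open>Bijections \<open>A \<rightarrow> B\<close>, normalised to the identity outside \<open>A\<close> so that a finite \<open>A\<close>
  gives a finite set to sum over.\<close>
definition bijections :: "'a set \<Rightarrow> 'a set \<Rightarrow> ('a \<Rightarrow> 'a) set" where
  "bijections A B = {t. bij_betw t A B \<and> (\<forall>x. x \<notin> A \<longrightarrow> t x = x)}"

definition minor :: "('a::linorder \<Rightarrow> 'a \<Rightarrow> real) \<Rightarrow> 'a set \<Rightarrow> 'a set \<Rightarrow> real" where
  "minor g A B = (\<Sum>t\<in>bijections A B. inversion_sign A t * (\<Prod>x\<in>A. g x (t x)))"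

lemma bijections_fiber:
  assumes "a \<in> A" "b \<in> B"
  shows "{t \<in> bijections A B. t a = b} = (\<lambda>s. s(a := b)) ` bijections (A - {a}) (B - {b})"
proof
  show "{t \<in> bijections A B. t a = b} \<subseteq> (\<lambda>s. s(a := b)) ` bijections (A - {a}) (B - {b})"
  proof
    fix t assume "t \<in> {t \<in> bijections A B. t a = b}"
    then have bij: "bij_betw t A B" and out: "\<forall>x. x \<notin> A \<longrightarrow> t x = x" and ta: "t a = b"
      by (auto simp: bijections_def)
    have "bij_betw t (A - {a}) (B - {b})"
      using bij_betw_DiffI[OF bij, of "{a}" "{b}"] assms ta by auto
    then have "bij_betw (t(a := a)) (A - {a}) (B - {b})"
      by (rule bij_betw_cong[THEN iffD1, rotated]) auto
    then have "t(a := a) \<in> bijections (A - {a}) (B - {b})"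
      using out by (auto simp: bijections_def)
    moreover have "t = (t(a := a))(a := b)" using ta by auto
    ultimately show "t \<in> (\<lambda>s. s(a := b)) ` bijections (A - {a}) (B - {b})" by blast
  qed
next
  show "(\<lambda>s. s(a := b)) ` bijections (A - {a}) (B - {b}) \<subseteq> {t \<in> bijections A B. t a = b}"
  proof
    fix t assume "t \<in> (\<lambda>s. s(a := b)) ` bijections (A - {a}) (B - {b})"
    then obtain s where s: "s \<in> bijections (A - {a}) (B - {b})" and t: "t = s(a := b)" by blast
    then have bij: "bij_betw s (A - {a}) (B - {b})" and out: "\<forall>x. x \<notin> A - {a} \<longrightarrow> s x = x"
      by (auto simp: bijections_def)
    have "bij_betw t (A - {a}) (B - {b})"
      unfolding t by (rule bij_betw_cong[THEN iffD1, OF _ bij]) auto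
    moreover have "bij_betw t {a} {b}" using t by simp
    ultimately have "bij_betw t ((A - {a}) \<union> {a}) ((B - {b}) \<union> {b})"
      by (rule bij_betw_combine) auto
    then have "bij_betw t A B" using assms by (simp add: insert_absorb)
    then show "t \<in> {t \<in> bijections A B. t a = b}" using out t assms by (auto simp: bijections_def)
  qed
qed

lemma inj_on_fun_upd_bijections: "inj_on (\<lambda>s. s(a := b)) (bijections (A - {a}) B)"
proof (rule inj_onI, rule ext)
  fix s s' x assume "s \<in> bijections (A - {a}) B" "s' \<in> bijections (A - {a}) B"
    and "s(a := b) = s'(a := b)"
  then show "s x = s' x" by (cases "x = a") (auto simp: bijections_def dest: fun_cong[of _ _ x])
qed

lemma inversions_fun_upd:
  assumes "a \<in> A" and "\<forall>x \<in> A - {a}. s x \<noteq> b"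
  shows "inversions A (s(a := b)) = inversions (A - {a}) s
    \<union> (\<lambda>x. (x, a)) ` {x \<in> A - {a}. x < a \<and> b < s x}
    \<union> (\<lambda>y. (a, y)) ` {y \<in> A - {a}. a < y \<and> s y < b}"
  using assms by (auto simp: inversions_def neq_iff)

lemma card_inversions_fun_upd:
  assumes "finite A" "a \<in> A" and "\<forall>x \<in> A - {a}. s x \<noteq> b"
  shows "card (inversions A (s(a := b))) = card (inversions (A - {a}) s)
    + card {x \<in> A - {a}. x < a \<and> b < s x} + card {y \<in> A - {a}. a < y \<and> s y < b}"
proof -
  have "finite (inversions (A - {a}) s)"
    by (rule finite_subset[of _ "A \<times> A"]) (auto simp: inversions_def assms(1))
  then show ?thesis
    unfolding inversions_fun_upd[OF assms(2,3)] using assms(1)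
    by (subst card_Un_disjoint; auto simp: inversions_def card_Un_disjoint card_image inj_on_def)+
qed

lemma inv_sign_singleton: "inv_sign {a} S = (-1) ^ card {k \<in> S. k < a}"
proof -
  have "{(i, k). i \<in> {a} \<and> k \<in> S \<and> k < i} = Pair a ` {k \<in> S. k < a}" by auto
  then show ?thesis by (simp add: inv_sign_def card_image inj_on_def)
qed

lemma neg_one_power_card_add:
  assumes "finite U" "finite W"
  shows "(-1::real) ^ (card U + card W) = (-1) ^ (card (U - W) + card (W - U))"
proof -
  have "card U = card (U - W) + card (U \<inter> W)" "card W = card (W - U) + card (U \<inter> W)"
    using assms card_Diff_subset_Int[of U W] card_Diff_subset_Int[of W U] card_mono[of U "U \<inter> W"]
      card_mono[of W "U \<inter> W"] by (auto simp: Int_commute)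
  then show ?thesis by (simp add: power_add power_mult_distrib flip: mult.assoc)
qed

lemma inversion_sign_fun_upd:
  assumes "finite A" "a \<in> A" "b \<in> B" and s: "s \<in> bijections (A - {a}) (B - {b})"
  shows "inversion_sign A (s(a := b))
    = inv_sign {a} (A - {a}) * inv_sign {b} (B - {b}) * inversion_sign (A - {a}) s"
proof -
  let ?U = "{x \<in> A - {a}. x < a}" and ?W = "{x \<in> A - {a}. s x < b}"
  have bij: "bij_betw s (A - {a}) (B - {b})" using s by (simp add: bijections_def)
  then have s_ne: "\<forall>x \<in> A - {a}. s x \<noteq> b" by (auto simp: bij_betw_def)
  have "s ` ?W = {y \<in> s ` (A - {a}). y < b}" by blast
  then have "{y \<in> B - {b}. y < b} = s ` ?W" by (simp add: bij_betw_imp_surj_on[OF bij])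
  moreover have "inj_on s ?W" using bij by (auto simp: bij_betw_def inj_on_def)
  ultimately have "inv_sign {b} (B - {b}) = (-1) ^ card ?W"
    by (simp add: inv_sign_singleton card_image)
  moreover have "?U - ?W = {x \<in> A - {a}. x < a \<and> b < s x}" "?W - ?U = {y \<in> A - {a}. a < y \<and> s y < b}"
    using s_ne by (auto simp: neq_iff)
  ultimately show ?thesis
    using neg_one_power_card_add[of ?U ?W] assms(1)
    by (simp add: inversion_sign_def inv_sign_singleton card_inversions_fun_upd[OF assms(1,2) s_ne] power_add)
qed

lemma minor_expand_row:
  fixes g :: "'a::{finite,linorder} \<Rightarrow> 'a \<Rightarrow> real"
  assumes a: "a \<in> A"
  shows "minor g A B = (\<Sum>b\<in>B. inv_sign {a} (A - {a}) * inv_sign {b} (B - {b}) * g a b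
    * minor g (A - {a}) (B - {b}))"
proof -
  let ?term = "\<lambda>t. inversion_sign A t * (\<Prod>x\<in>A. g x (t x))"
  have "(\<lambda>t. t a) ` bijections A B \<subseteq> B" using a by (auto simp: bijections_def bij_betw_def)
  then have "minor g A B = (\<Sum>b\<in>B. \<Sum>t\<in>{t \<in> bijections A B. t a = b}. ?term t)"
    unfolding minor_def by (intro sum.group[symmetric]) auto
  also have "\<dots> = (\<Sum>b\<in>B. \<Sum>s\<in>bijections (A - {a}) (B - {b}). ?term (s(a := b)))"
  proof (rule sum.cong[OF refl])
    fix b assume "b \<in> B"
    show "(\<Sum>t\<in>{t \<in> bijections A B. t a = b}. ?term t)
      = (\<Sum>s\<in>bijections (A - {a}) (B - {b}). ?term (s(a := b)))"
      unfolding bijections_fiber[OF a \<open>b \<in> B\<close>]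
      by (rule sum.reindex[OF inj_on_fun_upd_bijections, unfolded comp_def])
  qed
  also have "\<dots> = (\<Sum>b\<in>B. inv_sign {a} (A - {a}) * inv_sign {b} (B - {b}) * g a b
    * minor g (A - {a}) (B - {b}))"
  proof (rule sum.cong[OF refl])
    fix b assume b: "b \<in> B"
    have "?term (s(a := b)) = inv_sign {a} (A - {a}) * inv_sign {b} (B - {b}) * g a b
        * (inversion_sign (A - {a}) s * (\<Prod>x\<in>A - {a}. g x (s x)))"
      if "s \<in> bijections (A - {a}) (B - {b})" for s
    proof -
      have "(\<Prod>x\<in>A - {a}. g x ((s(a := b)) x)) = (\<Prod>x\<in>A - {a}. g x (s x))"
        by (rule prod.cong) auto
      then show ?thesis
        using inversion_sign_fun_upd[OF finite a b that] a by (simp add: prod.remove)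
    qed
    then show "(\<Sum>s\<in>bijections (A - {a}) (B - {b}). ?term (s(a := b)))
      = inv_sign {a} (A - {a}) * inv_sign {b} (B - {b}) * g a b * minor g (A - {a}) (B - {b})"
      by (simp add: minor_def sum_distrib_left)
  qed
  finally show ?thesis .
qed

lemma minor_empty: "minor g {} B = (if B = {} then 1 else 0)"
proof -
  have "bijections {} B = (if B = {} then {id} else {})"
    by (auto simp: bijections_def bij_betw_def)
  then show ?thesis by (simp add: minor_def inversion_sign_def inversions_def)
qed

definition matrix_dvec :: "('n \<Rightarrow> 'n \<Rightarrow> real) \<Rightarrow> 'n dvec" where
  "matrix_dvec g = (\<lambda>A B. if card A = 1 \<and> card B = 1 then g (the_elem A) (the_elem B) else 0)"

lemma sum_Pow_card_eq_1:
  assumes "finite A"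
  shows "(\<Sum>I\<in>Pow A. if card I = 1 then f I else (0::real)) = (\<Sum>a\<in>A. f {a})"
proof -
  have "{I \<in> Pow A. card I = 1} = (\<lambda>a. {a}) ` A" by (auto simp: card_1_singleton_iff)
  then have "(\<Sum>I\<in>Pow A. if card I = 1 then f I else 0) = (\<Sum>I\<in>(\<lambda>a. {a}) ` A. f I)"
    using assms by (simp add: sum.If_cases Int_def)
  also have "\<dots> = (\<Sum>a\<in>A. f {a})" by (simp add: sum.reindex)
  finally show ?thesis .
qed

lemma dmult_matrix_dvec:
  fixes A B :: "'n::{finite,linorder} set"
  shows "dmult (matrix_dvec g) X A B = (\<Sum>a\<in>A. \<Sum>b\<in>B.
    inv_sign {a} (A - {a}) * inv_sign {b} (B - {b}) * g a b * X (A - {a}) (B - {b}))"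
proof -
  have "dmult (matrix_dvec g) X A B = (\<Sum>I\<in>Pow A. if card I = 1 then (\<Sum>J\<in>Pow B. if card J = 1
      then inv_sign I (A - I) * inv_sign J (B - J) * g (the_elem I) (the_elem J) * X (A - I) (B - J)
      else 0) else 0)"
    unfolding dmult_def matrix_dvec_def by (auto intro!: sum.cong)
  then show ?thesis by (simp only: sum_Pow_card_eq_1[OF finite] the_elem_eq)
qed

lemma dpow_matrix_dvec:
  fixes A B :: "'n::{finite,linorder} set"
  shows "dpow (matrix_dvec g) p A B = (if card A = p then fact p * minor g A B else 0)"
proof (induction p arbitrary: A B)
  case 0
  show ?case by (auto simp: dv_one_def minor_empty)
next
  case (Suc p)
  have row: "(\<Sum>b\<in>B. inv_sign {a} (A - {a}) * inv_sign {b} (B - {b}) * g a b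
      * (if card (A - {a}) = p then fact p * minor g (A - {a}) (B - {b}) else 0))
    = (if card A = Suc p then fact p * minor g A B else 0)" if "a \<in> A" for a
  proof -
    have "card (A - {a}) = p \<longleftrightarrow> card A = Suc p"
      using that card_Diff_singleton[OF that] card_gt_0_iff[of A] by auto
    then show ?thesis
      by (simp add: minor_expand_row[OF that] sum_distrib_left mult_ac)
  qed
  have "dpow (matrix_dvec g) (Suc p) A B
    = (\<Sum>a\<in>A. if card A = Suc p then fact p * minor g A B else 0)"
    unfolding dpow.simps dmult_matrix_dvec Suc.IH by (rule sum.cong[OF refl row])
  also have "\<dots> = (if card A = Suc p then fact (Suc p) * minor g A B else 0)"
    by simp
  finally show ?case .
qed

lemma dexp_matrix_dvec:
  fixes A B :: "'n::{finite,linorder} set"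
  shows "dexp (matrix_dvec g) A B = minor g A B"
proof -
  have "(\<lambda>p. dpow (matrix_dvec g) p A B / fact p) = (\<lambda>p. if p = card A then minor g A B else 0)"
    by (auto simp: dpow_matrix_dvec)
  moreover have "(\<lambda>p. if p = card A then minor g A B else 0) sums minor g A B"
    by (rule sums_single)
  ultimately show ?thesis unfolding dexp_def by (simp add: sums_iff)
qed

lemma ext_wedge_ext_vec:
  fixes L :: "'n::{finite,linorder} set"
  shows "ext_wedge (ext_vec v) Y L = (\<Sum>l\<in>L. inv_sign {l} (L - {l}) * v $ l * Y (L - {l}))"
proof -
  have "ext_wedge (ext_vec v) Y L
    = (\<Sum>I\<in>Pow L. if card I = 1 then inv_sign I (L - I) * v $ the_elem I * Y (L - I) else 0)"
    unfolding ext_wedge_def ext_vec_def by (auto intro!: sum.cong)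
  then show ?thesis by (simp only: sum_Pow_card_eq_1[OF finite] the_elem_eq)
qed

lemma hat_basis_Min:
  assumes "J \<noteq> {}"
  shows "hat_basis h J = ext_wedge (ext_vec (hbar h (axis (Min J) 1))) (hat_basis h (J - {Min J}))"
  using assms by (simp add: hat_basis_def sorted_list_of_set_nonempty)

text \<open>\<open>hat h (e_J)\<close> is built by wedging from the left with the smallest index first, so the
  Laplace expansion along \<open>Min J\<close> carries no sign.\<close>
lemma hat_basis_eq_minor:
  "hat_basis h J L = minor (\<lambda>i j. h (axis i 1) (axis j 1)) J L"
proof (induction "card J" arbitrary: J L)
  case 0
  then show ?case by (simp add: hat_basis_def ext_one_def minor_empty)
next
  case (Suc n)
  then have "J \<noteq> {}" by auto
  define j where "j = Min J"
  have j: "j \<in> J" using \<open>J \<noteq> {}\<close> by (simp add: j_def)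
  have "{k \<in> J - {j}. k < j} = {}" by (auto simp: j_def dest: Min_le[OF finite] leD)
  then have "inv_sign {j} (J - {j}) = 1" by (simp only: inv_sign_singleton card.empty power_0)
  moreover have "n = card (J - {j})" using Suc.hyps(2) j by simp
  ultimately show ?case
    unfolding hat_basis_Min[OF \<open>J \<noteq> {}\<close>] j_def[symmetric] ext_wedge_ext_vec minor_expand_row[OF j]
    using Suc.hyps(1) by (simp add: hbar_def mult_ac)
qed

definition dv_transpose :: "'n dvec \<Rightarrow> 'n dvec" where
  "dv_transpose X = (\<lambda>A B. X B A)"

lemma dpow_dv_transpose: "dpow (dv_transpose X) p A B = dpow X p B A"
proof (induction p arbitrary: A B)
  case 0
  show ?case by (auto simp: dv_one_def)
next
  case (Suc p)
  show ?case
    unfolding dpow.simps dmult_def Suc.IH by (subst sum.swap) (simp add: dv_transpose_def mult_ac)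
qed

lemma dexp_dv_transpose: "dexp (dv_transpose X) A B = dexp X B A"
  by (simp add: dexp_def dpow_dv_transpose)

lemma form_dvec_eq_matrix_dvec: "form_dvec h = matrix_dvec (\<lambda>i j. h (axis i 1) (axis j 1))"
  by (simp add: form_dvec_def matrix_dvec_def)

lemma form_dvec_form_transpose: "form_dvec (form_transpose h) = dv_transpose (form_dvec h)"
  by (auto simp: form_dvec_def form_transpose_def dv_transpose_def fun_eq_iff)

lemma dexp_form_dvec: "dexp (form_dvec h) = hat_basis h"
  by (simp add: fun_eq_iff form_dvec_eq_matrix_dvec dexp_matrix_dvec hat_basis_eq_minor)

theorem proposition1p8:
  fixes h :: "real ^ ('n::{finite,linorder}) \<Rightarrow> real ^ ('n::{finite,linorder}) \<Rightarrow> real"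
    and \<omega> :: "('n::{finite,linorder}) dvec"
  assumes "bilinear h"
  shows "hatR h \<omega> = dcomp (dexp (form_dvec h)) \<omega>
     \<and> hatL h \<omega> = dcomp \<omega> (dexp (form_dvec (form_transpose h)))"
proof
  show "hatR h \<omega> = dcomp (dexp (form_dvec h)) \<omega>"
    by (simp add: hatR_def dcomp_def dexp_form_dvec mult.commute)
  show "hatL h \<omega> = dcomp \<omega> (dexp (form_dvec (form_transpose h)))"
    by (simp add: hatL_def dcomp_def form_dvec_form_transpose dexp_dv_transpose dexp_form_dvec)
qed

end
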